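(* If there exists a projective plane of order $s\ge2$ (equivalently a Steiner system $S(2,s+1,s^2+s+1)$), then $q''_0(2,s+1,s^2+s+1)=s^2+1$; that is, the smallest $q$ for which there exists an $(s^2+s+1,\,s^2,\,s^2+s)_q$ code of size $s^2+s+1$ is $s^2+1$.
   Context: $\mathbb{Z}_q=\{0,\dots,q-1\}$ (an alphabet); $\mathrm{wt}$ = number of nonzero coordinates; $d$ = Hamming distance; $J_q(n,w)$ = weight-$w$ words of $\mathbb{Z}_q^n$. An $(n,w,d)_q$ code of size $M$ is a subset $C\subseteq J_q(n,w)$ with $|C|=M$ and pairwise distances at least $d$. A Steiner system $S(t,k,n)$ is a pair $(N,B)$, $|N|=n$, $B$ a set of $k$-subsets (blocks) with every $t$-subset in exactly one block. For $t,k,n$ such that an $S(t,k,n)$ exists, $q''_0(t,k,n)$ is the smallest $q$ for which an $(n,n-k,n-t+1)_q$ code of size $\binom{n}{t}/\binom{k}{t}$ exists. *)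

theory Defs
  imports Main
begin

text \<open>Words of length n over Z_q = {0..q-1}, represented as functions nat => nat
  supported on {0..<n}.\<close>
definition words :: "nat \<Rightarrow> nat \<Rightarrow> (nat \<Rightarrow> nat) set" where
  "words q n = {x. (\<forall>i<n. x i < q) \<and> (\<forall>i\<ge>n. x i = 0)}"

definition wt :: "nat \<Rightarrow> (nat \<Rightarrow> nat) \<Rightarrow> nat" where
  "wt n x = card {i. i < n \<and> x i \<noteq> 0}"

definition hdist :: "nat \<Rightarrow> (nat \<Rightarrow> nat) \<Rightarrow> (nat \<Rightarrow> nat) \<Rightarrow> nat" where
  "hdist n x y = card {i. i < n \<and> x i \<noteq> y i}"

definition is_code :: "nat \<Rightarrow> nat \<Rightarrow> nat \<Rightarrow> nat \<Rightarrow> nat \<Rightarrow> (nat \<Rightarrow> nat) set \<Rightarrow> bool" where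
  "is_code q n w d M C \<longleftrightarrow>
     C \<subseteq> words q n \<and> (\<forall>x\<in>C. wt n x = w) \<and> finite C \<and> card C = M \<and>
     (\<forall>x\<in>C. \<forall>y\<in>C. x \<noteq> y \<longrightarrow> hdist n x y \<ge> d)"

definition steiner_system :: "nat \<Rightarrow> nat \<Rightarrow> nat \<Rightarrow> 'a set \<Rightarrow> 'a set set \<Rightarrow> bool" where
  "steiner_system t k n N B \<longleftrightarrow>
     finite N \<and> card N = n \<and>
     (\<forall>b\<in>B. b \<subseteq> N \<and> card b = k) \<and>
     (\<forall>T. T \<subseteq> N \<and> card T = t \<longrightarrow> (\<exists>!b. b \<in> B \<and> T \<subseteq> b))"

definition q0'' :: "nat \<Rightarrow> nat \<Rightarrow> nat \<Rightarrow> nat" where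
  "q0'' t k n = (LEAST q. \<exists>C. is_code q n (n - k) (n - t + 1) ((n choose t) div (k choose t)) C)"

end

theory Submission
  imports Defs
begin

text \<open>
  Upper bound: identify the points of the projective plane with the coordinates 0, ..., n - 1,
  where n = s^2 + s + 1. For each point p number the s^2 lines missing p by 1, ..., s^2; the codeword
  of a line b is 0 on b and carries the number of b at every point off b. Two codewords can only
  agree at a point on both lines, hence in at most one coordinate.

  Lower bound: distance s^2 + s = n - 1 means that two codewords agree in at most one coordinate,
  so the numbers P_i of ordered pairs of distinct codewords agreeing at coordinate i sum to at most
  n (n - 1). If z_i codewords vanish at i, then sum z_i = n (s + 1), P_i >= z_i (z_i - 1), and
  z_i (z_i - 1) + (s + 1)^2 - (2 s + 1) z_i = (z_i - s - 1)^2. Hence P_i + (s + 1)^2 > (2 s + 1) z_i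
  unless z_i = s + 1; in that case, if q <= s^2, the s^2 nonzero entries at i take fewer than s^2
  values, and a collision yields two more agreeing pairs. Summing over i contradicts
  sum P_i <= n (n - 1).
\<close>

lemma card_lessThan_filter_add_not:
  "card {i. i < n \<and> P i} + card {i. i < n \<and> \<not> P i} = n"
proof -
  have "card ({i. i < n \<and> P i} \<union> {i. i < n \<and> \<not> P i}) = card {i. i < n \<and> P i} + card {i. i < n \<and> \<not> P i}"
    by (rule card_Un_disjoint) auto
  moreover have "{i. i < n \<and> P i} \<union> {i. i < n \<and> \<not> P i} = {..<n}"
    by auto
  ultimately show ?thesis
    by simp
qed

lemma card_agreements_add_hdist: "card {i. i < n \<and> x i = y i} + hdist n x y = n"
  unfolding hdist_def by (rule card_lessThan_filter_add_not)

lemma card_zeros_add_wt: "card {i. i < n \<and> x i = 0} + wt n x = n"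
  unfolding wt_def by (rule card_lessThan_filter_add_not)

lemma is_code_card_agreements_le_one:
  assumes "is_code q n w (n - 1) M C" and "x \<in> C" and "y \<in> C" and "x \<noteq> y"
  shows "card {i. i < n \<and> x i = y i} \<le> 1"
  using assms card_agreements_add_hdist[of n x y] unfolding is_code_def by fastforce

subsection \<open>Lower bound on the alphabet size\<close>

definition agreeing_pairs :: "(nat \<Rightarrow> nat) set \<Rightarrow> nat \<Rightarrow> ((nat \<Rightarrow> nat) \<times> (nat \<Rightarrow> nat)) set" where
  "agreeing_pairs C i = {(x, y) \<in> C \<times> C. x \<noteq> y \<and> x i = y i}"

lemma sum_card_agreeing_pairs_le:
  assumes "finite C"
    and "\<And>x y. x \<in> C \<Longrightarrow> y \<in> C \<Longrightarrow> x \<noteq> y \<Longrightarrow> card {i. i < n \<and> x i = y i} \<le> 1"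
  shows "(\<Sum>i<n. card (agreeing_pairs C i)) \<le> card C * (card C - 1)"
proof -
  define D where "D = Sigma C (\<lambda>x. C - {x})"
  have "finite D"
    using assms(1) by (simp add: D_def)
  have "agreeing_pairs C i = {p \<in> D. fst p i = snd p i}" for i
    by (auto simp: agreeing_pairs_def D_def)
  then have "(\<Sum>i<n. card (agreeing_pairs C i)) = (\<Sum>i<n. card {p \<in> D. fst p i = snd p i})"
    by simp
  also have "\<dots> = (\<Sum>p\<in>D. card {i \<in> {..<n}. fst p i = snd p i})"
    using sum.swap_restrict[of "{..<n}" D "\<lambda>_ _. 1::nat" "\<lambda>i p. fst p i = snd p i"] \<open>finite D\<close>
    by simp
  also have "\<dots> \<le> (\<Sum>p\<in>D. 1)"
  proof (intro sum_mono)
    fix p assume "p \<in> D"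
    then obtain x y where "p = (x, y)" "x \<in> C" "y \<in> C" "x \<noteq> y"
      by (auto simp: D_def)
    then show "card {i \<in> {..<n}. fst p i = snd p i} \<le> 1"
      using assms(2) by simp
  qed
  also have "\<dots> = card C * (card C - 1)"
    using assms(1) by (simp add: D_def)
  finally show ?thesis .
qed

lemma sum_card_zeros:
  assumes "finite C" and "\<And>x. x \<in> C \<Longrightarrow> wt n x = w"
  shows "(\<Sum>i<n. card {x \<in> C. x i = 0}) = (n - w) * card C"
proof -
  have "card {i \<in> {..<n}. x i = 0} = n - w" if "x \<in> C" for x
    using card_zeros_add_wt[of n x] assms(2)[OF that] by simp
  then show ?thesis
    using sum_multicount[of "{..<n}" C "\<lambda>i x. x i = 0" "n - w"] assms(1) by simp
qed

text \<open>The two extra pairs are a collision (x, y), (y, x) among the codewords not vanishing at i.\<close>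
lemma card_agreeing_pairs_ge:
  assumes "finite C" and "Z = {x \<in> C. x i = 0}"
  shows "card Z * (card Z - 1) + (if inj_on (\<lambda>x. x i) (C - Z) then 0 else 2)
    \<le> card (agreeing_pairs C i)"
proof -
  have "agreeing_pairs C i \<subseteq> C \<times> C"
    by (auto simp: agreeing_pairs_def)
  then have "finite (agreeing_pairs C i)"
    using assms(1) finite_subset by blast
  have "finite Z"
    using assms by simp
  have zero_pairs: "Sigma Z (\<lambda>x. Z - {x}) \<subseteq> agreeing_pairs C i"
    using assms(2) by (auto simp: agreeing_pairs_def)
  have card_zero_pairs: "card (Sigma Z (\<lambda>x. Z - {x})) = card Z * (card Z - 1)"
    using \<open>finite Z\<close> by simp
  show ?thesis
  proof (cases "inj_on (\<lambda>x. x i) (C - Z)")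
    case True
    then show ?thesis
      using card_mono[OF \<open>finite (agreeing_pairs C i)\<close> zero_pairs] card_zero_pairs by simp
  next
    case False
    then obtain x y where xy: "x \<in> C - Z" "y \<in> C - Z" "x \<noteq> y" "x i = y i"
      by (auto simp: inj_on_def)
    have "insert (x, y) (insert (y, x) (Sigma Z (\<lambda>x. Z - {x}))) \<subseteq> agreeing_pairs C i"
      using zero_pairs xy by (auto simp: agreeing_pairs_def)
    then have "card (insert (x, y) (insert (y, x) (Sigma Z (\<lambda>x. Z - {x}))))
        \<le> card (agreeing_pairs C i)"
      using \<open>finite (agreeing_pairs C i)\<close> by (rule card_mono[rotated])
    moreover have "card (insert (x, y) (insert (y, x) (Sigma Z (\<lambda>x. Z - {x}))))
        = card Z * (card Z - 1) + 2"
      using xy \<open>finite Z\<close> card_zero_pairs by simp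
    ultimately show ?thesis
      using False by simp
  qed
qed

text \<open>The difference of the two sides is (z - (s + 1))^2.\<close>
lemma mult_less_square_add:
  fixes z s :: nat
  assumes "z \<noteq> s + 1"
  shows "(2 * s + 1) * z < z * (z - 1) + (s + 1)^2"
proof -
  have "int (z * (z - 1) + (s + 1)^2) - int ((2 * s + 1) * z) = (int z - int s - 1)^2"
    by (cases z) (simp_all add: power2_eq_square algebra_simps)
  moreover have "0 < (int z - int s - 1)^2"
    using assms by simp
  ultimately show ?thesis
    by linarith
qed

lemma card_agreeing_pairs_coordinate_bound:
  assumes "1 \<le> s" and "q \<le> s^2"
    and C: "C \<subseteq> words q n" "finite C" "card C = s^2 + s + 1" and "i < n"
    and Z: "Z = {x \<in> C. x i = 0}"
  shows "(2 * s + 1) * card Z < card (agreeing_pairs C i) + (s + 1)^2"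
proof (cases "card Z = s + 1")
  case True
  have card_nonzeros: "card (C - Z) = s^2"
    using True C(2,3) by (simp add: Z card_Diff_subset)
  have nonzero_values: "(\<lambda>x. x i) ` (C - Z) \<subseteq> {1..<q}"
    using C(1) \<open>i < n\<close> by (auto simp: words_def Z)
  have "\<not> inj_on (\<lambda>x. x i) (C - Z)"
  proof
    assume "inj_on (\<lambda>x. x i) (C - Z)"
    then have "s^2 \<le> q - 1"
      using card_inj_on_le[OF _ nonzero_values] card_nonzeros by simp
    moreover have "1 \<le> s^2"
      using \<open>1 \<le> s\<close> by simp
    ultimately show False
      using \<open>q \<le> s^2\<close> by linarith
  qed
  then have "(s + 1) * s + 2 \<le> card (agreeing_pairs C i)"
    using card_agreeing_pairs_ge[OF C(2) Z] True by simp
  moreover have "(2 * s + 1) * (s + 1) = (s + 1) * s + (s + 1)^2"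
    by (simp add: power2_eq_square algebra_simps)
  ultimately show ?thesis
    unfolding True by linarith
next
  case False
  then show ?thesis
    using card_agreeing_pairs_ge[OF C(2) Z] mult_less_square_add[of "card Z" s]
    by (simp split: if_splits)
qed

lemma is_code_projective_plane_alphabet_ge:
  assumes "1 \<le> s" and n: "n = s^2 + s + 1" and code: "is_code q n (s^2) (s^2 + s) n C"
  shows "s^2 + 1 \<le> q"
proof (rule ccontr)
  assume "\<not> s^2 + 1 \<le> q"
  have C: "C \<subseteq> words q n" "finite C" "card C = n" "\<And>x. x \<in> C \<Longrightarrow> wt n x = s^2"
    using code unfolding is_code_def by auto
  define z where "z i = card {x \<in> C. x i = 0}" for i
  have "(\<Sum>i<n. (2 * s + 1) * z i) < (\<Sum>i<n. card (agreeing_pairs C i) + (s + 1)^2)"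
  proof (rule sum_strict_mono)
    show "(2 * s + 1) * z i < card (agreeing_pairs C i) + (s + 1)^2" if "i \<in> {..<n}" for i
      unfolding z_def using card_agreeing_pairs_coordinate_bound[OF \<open>1 \<le> s\<close> _ C(1,2) _ _ refl]
        that \<open>\<not> s^2 + 1 \<le> q\<close> C(3) n by simp
  qed (use n in auto)
  moreover have "(\<Sum>i<n. (2 * s + 1) * z i) = (2 * s + 1) * ((s + 1) * n)"
  proof -
    have "n - s^2 = s + 1"
      using n by simp
    then have "(\<Sum>i<n. z i) = (s + 1) * n"
      using sum_card_zeros[OF C(2,4)] C(3) by (simp add: z_def)
    then show ?thesis
      by (simp only: sum_distrib_left[symmetric])
  qed
  moreover have "(\<Sum>i<n. card (agreeing_pairs C i)) \<le> n * (n - 1)"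
  proof -
    have "is_code q n (s^2) (n - 1) n C"
      using code n by simp
    then have "card {i. i < n \<and> x i = y i} \<le> 1" if "x \<in> C" "y \<in> C" "x \<noteq> y" for x y
      using that by (rule is_code_card_agreements_le_one)
    from sum_card_agreeing_pairs_le[OF C(2) this] show ?thesis
      unfolding C(3) .
  qed
  moreover have "n * (n - 1) + n * (s + 1)^2 = (2 * s + 1) * ((s + 1) * n)"
    using n by (simp add: power2_eq_square algebra_simps)
  moreover have "(\<Sum>i<n. card (agreeing_pairs C i) + (s + 1)^2)
      = (\<Sum>i<n. card (agreeing_pairs C i)) + n * (s + 1)^2"
    by (simp add: sum.distrib)
  ultimately show False
    by linarith
qed

subsection \<open>Steiner systems\<close>

lemma card_Collect_eq_1_if_Ex1:
  assumes "\<exists>!x. P x"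
  shows "card {x. P x} = 1"
proof -
  from assms obtain x where "{x. P x} = {x}"
    by blast
  then show ?thesis
    by simp
qed

lemma steiner_systemD:
  assumes "steiner_system t k n N B"
  shows "finite N" and "card N = n" and "b \<in> B \<Longrightarrow> b \<subseteq> N" and "b \<in> B \<Longrightarrow> card b = k"
    and "T \<subseteq> N \<Longrightarrow> card T = t \<Longrightarrow> \<exists>!b. b \<in> B \<and> T \<subseteq> b"
  using assms by (auto simp: steiner_system_def)

lemma inj_on_image_subset_imp_subset:
  assumes "inj_on h N" and "T \<subseteq> N" and "c \<subseteq> N" and "h ` T \<subseteq> h ` c"
  shows "T \<subseteq> c"
  using assms inj_on_image_mem_iff[OF assms(1)] by blast

lemma steiner_system_image:
  assumes steiner: "steiner_system t k n N B" and h: "bij_betw h N N'"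
  shows "steiner_system t k n N' ((`) h ` B)"
proof -
  note S = steiner_systemD[OF steiner]
  have inj: "inj_on h N" and onto: "h ` N = N'"
    using h by (auto simp: bij_betw_def)
  have N': "finite N'" "card N' = n"
    using bij_betw_finite[OF h] bij_betw_same_card[OF h] S(1,2) by simp_all
  have blocks: "\<forall>b'\<in>(`) h ` B. b' \<subseteq> N' \<and> card b' = k"
  proof
    fix b' assume "b' \<in> (`) h ` B"
    then obtain b where "b \<in> B" "b' = h ` b"
      by blast
    then show "b' \<subseteq> N' \<and> card b' = k"
      using S(3,4) onto card_image[OF inj_on_subset[OF inj]] by blast
  qed
  have unique: "\<exists>!b'. b' \<in> (`) h ` B \<and> T' \<subseteq> b'" if "T' \<subseteq> N'" "card T' = t" for T'
  proof -
    define T where "T = {x \<in> N. h x \<in> T'}"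
    have "T \<subseteq> N" and image_T: "h ` T = T'"
      using that(1) onto by (auto simp: T_def)
    then have "card T = t"
      using that(2) card_image[OF inj_on_subset[OF inj]] by metis
    then obtain b where b: "b \<in> B" "T \<subseteq> b" and b_unique: "\<And>c. c \<in> B \<Longrightarrow> T \<subseteq> c \<Longrightarrow> c = b"
      using S(5)[OF \<open>T \<subseteq> N\<close>] by metis
    have preimage_unique: "c = b" if "c \<in> B" "T' \<subseteq> h ` c" for c
      using b_unique[OF that(1) inj_on_image_subset_imp_subset[OF inj \<open>T \<subseteq> N\<close> S(3)[OF that(1)]]]
        image_T that(2) by blast
    show ?thesis
    proof (rule ex1I[of _ "h ` b"])
      show "h ` b \<in> (`) h ` B \<and> T' \<subseteq> h ` b"
        using b image_T by blast
    next
      fix b' assume "b' \<in> (`) h ` B \<and> T' \<subseteq> b'"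
      then obtain c where "c \<in> B" "b' = h ` c" "T' \<subseteq> h ` c"
        by blast
      then show "b' = h ` b"
        using preimage_unique by simp
    qed
  qed
  show ?thesis
    unfolding steiner_system_def
  proof (intro conjI allI impI)
    fix T' assume "T' \<subseteq> N' \<and> card T' = t"
    then show "\<exists>!b'. b' \<in> (`) h ` B \<and> T' \<subseteq> b'"
      by (elim conjE) (rule unique)
  qed (use N' blocks in auto)
qed

lemma steiner_system_on_lessThan:
  assumes "steiner_system t k n N B"
  obtains \<A> where "steiner_system t k n {..<n} \<A>"
proof -
  obtain h where "bij_betw h N {0..<card N}"
    using ex_bij_betw_finite_nat[OF steiner_systemD(1)[OF assms]] by blast
  then have "bij_betw h N {..<n}"
    using steiner_systemD(2)[OF assms] by (simp add: atLeast0LessThan)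
  then show ?thesis
    using that steiner_system_image[OF assms] by blast
qed

lemma steiner_system_finite_blocks:
  assumes "steiner_system t k n N B"
  shows "finite B" and "b \<in> B \<Longrightarrow> finite b"
proof -
  have "finite N" and "B \<subseteq> Pow N"
    using steiner_systemD[OF assms] by auto
  then show "finite B"
    by (meson finite_Pow_iff finite_subset)
  show "b \<in> B \<Longrightarrow> finite b"
    using \<open>finite N\<close> \<open>B \<subseteq> Pow N\<close> finite_subset by blast
qed

lemma steiner_system_2_unique_block:
  assumes "steiner_system 2 k n N B" and "x \<in> N" "y \<in> N" "x \<noteq> y"
  shows "\<exists>!b. b \<in> B \<and> x \<in> b \<and> y \<in> b"
proof -
  have "{x, y} \<subseteq> N" "card {x, y} = 2"
    using assms(2-4) by auto
  then have "\<exists>!b. b \<in> B \<and> {x, y} \<subseteq> b"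
    by (rule steiner_systemD(5)[OF assms(1)])
  then show ?thesis
    by simp
qed

lemma steiner_system_2_card_Int_le_one:
  assumes steiner: "steiner_system 2 k n N B" and "b \<in> B" "c \<in> B" "b \<noteq> c"
  shows "card (b \<inter> c) \<le> 1"
proof (rule ccontr)
  assume "\<not> card (b \<inter> c) \<le> 1"
  then obtain x y where "x \<in> b \<inter> c" "y \<in> b \<inter> c" "x \<noteq> y"
    using card_le_Suc0_iff_eq[of "b \<inter> c"] steiner_system_finite_blocks(2)[OF steiner \<open>b \<in> B\<close>]
    by auto
  moreover have "b \<subseteq> N"
    using steiner_systemD(3)[OF steiner \<open>b \<in> B\<close>] .
  ultimately show False
    using steiner_system_2_unique_block[OF steiner] assms(2-4) by blast
qed

lemma steiner_system_2_card_blocks: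
  assumes steiner: "steiner_system 2 k n N B"
  shows "card B * (k choose 2) = n choose 2"
proof -
  note S = steiner_systemD[OF steiner]
  define pairs where "pairs = {T. T \<subseteq> N \<and> card T = 2}"
  have "finite pairs"
    using S(1) by (simp add: pairs_def)
  have "card {b \<in> B. T \<subseteq> b} = 1" if "T \<in> pairs" for T
    using that S(5) by (intro card_Collect_eq_1_if_Ex1) (simp add: pairs_def)
  then have "(\<Sum>b\<in>B. card {T \<in> pairs. T \<subseteq> b}) = card pairs"
    using sum_multicount[OF steiner_system_finite_blocks(1)[OF steiner] \<open>finite pairs\<close>,
        of "\<lambda>b T. T \<subseteq> b" 1]
    by simp
  moreover have "card {T \<in> pairs. T \<subseteq> b} = k choose 2" if "b \<in> B" for b
  proof -
    have "{T \<in> pairs. T \<subseteq> b} = {T. T \<subseteq> b \<and> card T = 2}"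
      using S(3)[OF that] by (auto simp: pairs_def)
    then show ?thesis
      using n_subsets[OF steiner_system_finite_blocks(2)[OF steiner that], of 2] S(4)[OF that]
      by simp
  qed
  moreover have "card pairs = n choose 2"
    using n_subsets[OF S(1), of 2] S(2) by (simp add: pairs_def)
  ultimately show ?thesis
    by simp
qed

lemma steiner_system_2_card_blocks_through:
  assumes steiner: "steiner_system 2 k n N B" and "p \<in> N"
  shows "card {b \<in> B. p \<in> b} * (k - 1) = n - 1"
proof -
  note S = steiner_systemD[OF steiner]
  have "finite {b \<in> B. p \<in> b}"
    using steiner_system_finite_blocks(1)[OF steiner] by simp
  have "card {b \<in> {b \<in> B. p \<in> b}. x \<in> b} = 1" if "x \<in> N - {p}" for x
  proof -
    have "card {b. b \<in> B \<and> p \<in> b \<and> x \<in> b} = 1"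
      using steiner_system_2_unique_block[OF steiner \<open>p \<in> N\<close>, of x] that
      by (intro card_Collect_eq_1_if_Ex1) auto
    then show ?thesis
      by (simp add: conj_assoc)
  qed
  then have "(\<Sum>b\<in>{b \<in> B. p \<in> b}. card {x \<in> N - {p}. x \<in> b}) = card (N - {p})"
    using sum_multicount[OF \<open>finite {b \<in> B. p \<in> b}\<close>, of "N - {p}" "\<lambda>b x. x \<in> b" 1] S(1)
    by simp
  moreover have "card {x \<in> N - {p}. x \<in> b} = k - 1" if "b \<in> {b \<in> B. p \<in> b}" for b
  proof -
    have "b \<in> B" "p \<in> b"
      using that by auto
    then have "{x \<in> N - {p}. x \<in> b} = b - {p}"
      using S(3) by auto
    then show ?thesis
      using \<open>p \<in> b\<close> S(4)[OF \<open>b \<in> B\<close>] steiner_system_finite_blocks(2)[OF steiner \<open>b \<in> B\<close>]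
      by simp
  qed
  ultimately have "card {b \<in> B. p \<in> b} * (k - 1) = card (N - {p})"
    by simp
  then show ?thesis
    using S(1,2) \<open>p \<in> N\<close> by simp
qed

lemma choose_two_projective_plane:
  "(s^2 + s + 1) choose 2 = (s^2 + s + 1) * ((s + 1) choose 2)"
proof -
  have "(s^2 + s + 1) - 1 = (s + 1) * s"
    by (simp add: power2_eq_square)
  then show ?thesis
    by (simp add: choose_two div_mult_swap del: mult_Suc mult_Suc_right)
qed

lemma projective_plane_card_lines:
  assumes "steiner_system 2 (s + 1) (s^2 + s + 1) N B" and "1 \<le> s"
  shows "card B = s^2 + s + 1"
proof -
  have "card B * ((s + 1) choose 2) = (s^2 + s + 1) * ((s + 1) choose 2)"
    using steiner_system_2_card_blocks[OF assms(1)] choose_two_projective_plane by simp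
  moreover have "(s + 1) choose 2 \<noteq> 0"
    using assms(2) by simp
  ultimately show ?thesis
    using mult_right_cancel by metis
qed

lemma projective_plane_card_lines_avoiding:
  assumes steiner: "steiner_system 2 (s + 1) (s^2 + s + 1) N B" and "1 \<le> s" and "p \<in> N"
  shows "card {b \<in> B. p \<notin> b} = s^2"
proof -
  have "s * card {b \<in> B. p \<in> b} = s * (s + 1)"
    using steiner_system_2_card_blocks_through[OF steiner \<open>p \<in> N\<close>]
    by (simp add: power2_eq_square algebra_simps)
  then have "card {b \<in> B. p \<in> b} = s + 1"
    using \<open>1 \<le> s\<close> mult_left_cancel[of s] by (metis not_one_le_zero)
  moreover have "{b \<in> B. p \<notin> b} = B - {b \<in> B. p \<in> b}"
    by auto
  ultimately show ?thesis
    using projective_plane_card_lines[OF steiner \<open>1 \<le> s\<close>] steiner_system_finite_blocks(1)[OF steiner]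
    by (simp add: card_Diff_subset)
qed

subsection \<open>Codes from projective planes\<close>

locale avoiding_labelling =
  fixes n r :: nat and \<A> :: "nat set set" and label :: "nat \<Rightarrow> nat set \<Rightarrow> nat"
  assumes label_inj: "i < n \<Longrightarrow> inj_on (label i) {A \<in> \<A>. i \<notin> A}"
    and label_range: "i < n \<Longrightarrow> A \<in> \<A> \<Longrightarrow> i \<notin> A \<Longrightarrow> label i A \<in> {1..r}"
begin

definition word :: "nat set \<Rightarrow> nat \<Rightarrow> nat" where
  "word A i = (if i < n \<and> i \<notin> A then label i A else 0)"

lemma word_eq_0_iff:
  assumes "i < n" and "A \<in> \<A>"
  shows "word A i = 0 \<longleftrightarrow> i \<in> A"
  using label_range[OF assms] assms(1) by (auto simp: word_def)

lemma word_in_words: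
  assumes "A \<in> \<A>"
  shows "word A \<in> words (r + 1) n"
proof -
  have "word A i < r + 1" for i
    using label_range[OF _ assms, of i] by (auto simp: word_def)
  moreover have "word A i = 0" if "n \<le> i" for i
    using that by (simp add: word_def)
  ultimately show ?thesis
    by (simp add: words_def)
qed

lemma word_agree_imp_mem:
  assumes "A \<in> \<A>" "A' \<in> \<A>" "A \<noteq> A'" and "i < n" and "word A i = word A' i"
  shows "i \<in> A"
proof (rule ccontr)
  assume "i \<notin> A"
  then have "word A i = label i A" "label i A \<noteq> 0"
    using label_range[OF assms(4,1)] assms(4) by (auto simp: word_def)
  then have "i \<notin> A'" "label i A = label i A'"
    using assms(5) by (auto simp: word_def split: if_splits)
  then have "A = A'"
    using inj_onD[OF label_inj[OF assms(4)]] assms(1,2) \<open>i \<notin> A\<close> by blast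
  with assms(3) show False ..
qed

lemma word_agreements_subset:
  assumes "A \<in> \<A>" "A' \<in> \<A>" "A \<noteq> A'"
  shows "{i. i < n \<and> word A i = word A' i} \<subseteq> A \<inter> A'"
  using word_agree_imp_mem[OF assms] word_agree_imp_mem[OF assms(2,1) assms(3)[symmetric]]
  by auto

end

lemma ex_avoiding_labelling:
  assumes "finite \<A>" and "\<And>i. i < n \<Longrightarrow> card {A \<in> \<A>. i \<notin> A} \<le> r"
  obtains label where "avoiding_labelling n r \<A> label"
proof -
  have "\<exists>l. i < n \<longrightarrow> l ` {A \<in> \<A>. i \<notin> A} \<subseteq> {1..r} \<and> inj_on l {A \<in> \<A>. i \<notin> A}" for i
  proof (cases "i < n")
    case True
    have "card {A \<in> \<A>. i \<notin> A} \<le> card {1..r}"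
      using assms(2)[OF True] by simp
    then show ?thesis
      using card_le_inj[of "{A \<in> \<A>. i \<notin> A}" "{1..r}"] assms(1) by simp
  qed simp
  then obtain label where
    "\<And>i. i < n \<Longrightarrow> label i ` {A \<in> \<A>. i \<notin> A} \<subseteq> {1..r} \<and> inj_on (label i) {A \<in> \<A>. i \<notin> A}"
    using choice[of "\<lambda>i l. i < n \<longrightarrow> l ` {A \<in> \<A>. i \<notin> A} \<subseteq> {1..r} \<and> inj_on l {A \<in> \<A>. i \<notin> A}"]
    by blast
  then have "avoiding_labelling n r \<A> label"
    by unfold_locales blast+
  then show ?thesis
    using that by blast
qed

lemma is_code_of_set_family:
  fixes \<A> :: "nat set set"
  assumes sets: "\<And>A. A \<in> \<A> \<Longrightarrow> A \<subseteq> {..<n} \<and> card A = k"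
    and Int: "\<And>A A'. A \<in> \<A> \<Longrightarrow> A' \<in> \<A> \<Longrightarrow> A \<noteq> A' \<Longrightarrow> card (A \<inter> A') \<le> 1"
    and avoiding: "\<And>i. i < n \<Longrightarrow> card {A \<in> \<A>. i \<notin> A} \<le> r"
  shows "\<exists>C. is_code (r + 1) n (n - k) (n - 1) (card \<A>) C"
proof -
  have "\<A> \<subseteq> Pow {..<n}"
    using sets by auto
  then have "finite \<A>"
    by (rule finite_subset) simp
  then obtain label where "avoiding_labelling n r \<A> label"
    using ex_avoiding_labelling avoiding by blast
  then interpret avoiding_labelling n r \<A> label .
  have zeros: "{i. i < n \<and> word A i = 0} = A" if "A \<in> \<A>" for A
    using word_eq_0_iff[OF _ that] sets[OF that] by auto
  have weight: "wt n (word A) = n - k" if "A \<in> \<A>" for A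
    using card_zeros_add_wt[of n "word A"] zeros[OF that] sets[OF that] by simp
  have "inj_on word \<A>"
    by (rule inj_onI) (metis zeros)
  have distance: "n - 1 \<le> hdist n (word A) (word A')" if "A \<in> \<A>" "A' \<in> \<A>" "A \<noteq> A'" for A A'
  proof -
    have "finite A"
      using sets[OF that(1)] finite_subset by blast
    then have "card {i. i < n \<and> word A i = word A' i} \<le> card (A \<inter> A')"
      using word_agreements_subset[OF that] by (intro card_mono) simp_all
    then show ?thesis
      using Int[OF that] card_agreements_add_hdist[of n "word A" "word A'"] by simp
  qed
  have "is_code (r + 1) n (n - k) (n - 1) (card \<A>) (word ` \<A>)"
    unfolding is_code_def
  proof (intro conjI ballI impI)
    show "word ` \<A> \<subseteq> words (r + 1) n"
      using word_in_words by blast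
    show "finite (word ` \<A>)"
      using \<open>finite \<A>\<close> by simp
    show "card (word ` \<A>) = card \<A>"
      using card_image[OF \<open>inj_on word \<A>\<close>] .
  next
    fix x assume "x \<in> word ` \<A>"
    then show "wt n x = n - k"
      using weight by blast
  next
    fix x y assume "x \<in> word ` \<A>" "y \<in> word ` \<A>" "x \<noteq> y"
    then show "n - 1 \<le> hdist n x y"
      using distance by blast
  qed
  then show ?thesis
    by blast
qed

lemma projective_plane_code:
  assumes "steiner_system 2 (s + 1) n N B" and "n = s^2 + s + 1" and "1 \<le> s"
  shows "\<exists>C. is_code (s^2 + 1) n (s^2) (s^2 + s) n C"
proof -
  obtain \<A> where plane: "steiner_system 2 (s + 1) n {..<n} \<A>"
    using steiner_system_on_lessThan[OF assms(1)] .
  have "\<exists>C. is_code (s^2 + 1) n (n - (s + 1)) (n - 1) (card \<A>) C"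
  proof (rule is_code_of_set_family)
    show "\<And>A. A \<in> \<A> \<Longrightarrow> A \<subseteq> {..<n} \<and> card A = s + 1"
      using steiner_systemD(3,4)[OF plane] by blast
    show "\<And>A A'. A \<in> \<A> \<Longrightarrow> A' \<in> \<A> \<Longrightarrow> A \<noteq> A' \<Longrightarrow> card (A \<inter> A') \<le> 1"
      using steiner_system_2_card_Int_le_one[OF plane] .
    show "\<And>i. i < n \<Longrightarrow> card {A \<in> \<A>. i \<notin> A} \<le> s^2"
      using projective_plane_card_lines_avoiding[OF plane[unfolded assms(2)] assms(3)] assms(2)
      by simp
  qed
  then show ?thesis
    using projective_plane_card_lines[OF plane[unfolded assms(2)] assms(3)] assms(2) by simp
qed

theorem mainTheorem19:
  fixes s :: nat
  assumes "s \<ge> 2"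
    and "\<exists>(N :: nat set) B. steiner_system 2 (s + 1) (s^2 + s + 1) N B"
  shows "q0'' 2 (s + 1) (s^2 + s + 1) = s^2 + 1"
proof -
  define n where "n = s^2 + s + 1"
  have "1 \<le> s"
    using assms(1) by simp
  obtain N :: "nat set" and B where plane: "steiner_system 2 (s + 1) n N B"
    using assms(2) unfolding n_def by blast
  have "(n choose 2) div ((s + 1) choose 2) = n" and "n - (s + 1) = s^2" and "n - 2 + 1 = s^2 + s"
    using choose_two_projective_plane[of s] \<open>1 \<le> s\<close> by (simp_all add: n_def)
  then show ?thesis
    unfolding q0''_def n_def[symmetric]
  proof (simp only:, intro Least_equality)
    show "\<exists>C. is_code (s^2 + 1) n (s^2) (s^2 + s) n C"
      using projective_plane_code[OF plane n_def \<open>1 \<le> s\<close>] .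
    show "s^2 + 1 \<le> q" if "\<exists>C. is_code q n (s^2) (s^2 + s) n C" for q
      using that is_code_projective_plane_alphabet_ge[OF \<open>1 \<le> s\<close> n_def] by blast
  qed
qed

end
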